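(* Let $G$ be a path-pairable graph on $n$ vertices with diameter $d \geq 20$, and let $x,y$ be vertices with $d(x,y)=d$. For $0\le i\le d$ let $S_i=\{z\in V(G): d(x,z)=i\}$, and define $A=\bigcup_{i=0}^{\lceil d/3\rceil}S_i$ and $C=\bigcup_{i=\lfloor 2d/3\rfloor}^{d}S_i$. Then $|A|\geq \min\left(\frac{n}{2},\frac{d^2}{100}\right)$ and $|C|\geq \min\left(\frac{n}{2},\frac{d^2}{100}\right)$.
   Context: A graph $G$ on $n=2m$ vertices is path-pairable if for every partition of its vertex set into $m$ pairs $\{x_1,y_1\},\dots,\{x_m,y_m\}$ there exist pairwise edge-disjoint paths $P_1,\dots,P_m$ such that $P_i$ joins $x_i$ to $y_i$ for each $i$. $d(u,v)$ denotes the graph distance between vertices $u$ and $v$; the diameter is the maximum distance between two vertices. *)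

theory Defs
  imports Complex_Main
begin

definition simple_graph :: "'a set \<Rightarrow> ('a \<Rightarrow> 'a \<Rightarrow> bool) \<Rightarrow> bool" where
  "simple_graph V E \<longleftrightarrow> finite V \<and> (\<forall>u v. E u v \<longrightarrow> u \<in> V \<and> v \<in> V)
     \<and> (\<forall>u v. E u v \<longrightarrow> E v u) \<and> (\<forall>u. \<not> E u u)"

definition walk :: "'a set \<Rightarrow> ('a \<Rightarrow> 'a \<Rightarrow> bool) \<Rightarrow> 'a list \<Rightarrow> bool" where
  "walk V E xs \<longleftrightarrow> xs \<noteq> [] \<and> set xs \<subseteq> V \<and> (\<forall>i. Suc i < length xs \<longrightarrow> E (xs ! i) (xs ! Suc i))"

definition gpath :: "'a set \<Rightarrow> ('a \<Rightarrow> 'a \<Rightarrow> bool) \<Rightarrow> 'a list \<Rightarrow> bool" where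
  "gpath V E xs \<longleftrightarrow> walk V E xs \<and> distinct xs"

definition path_edges :: "'a list \<Rightarrow> 'a set set" where
  "path_edges xs = {{xs ! i, xs ! Suc i} | i. Suc i < length xs}"

text \<open>Graph distance (number of edges of a shortest walk); only meaningful when connected.\<close>
definition gdist :: "'a set \<Rightarrow> ('a \<Rightarrow> 'a \<Rightarrow> bool) \<Rightarrow> 'a \<Rightarrow> 'a \<Rightarrow> nat" where
  "gdist V E u v = (LEAST k. \<exists>xs. walk V E xs \<and> hd xs = u \<and> last xs = v \<and> length xs = Suc k)"

definition connected_graph :: "'a set \<Rightarrow> ('a \<Rightarrow> 'a \<Rightarrow> bool) \<Rightarrow> bool" where
  "connected_graph V E \<longleftrightarrow> (\<forall>u\<in>V. \<forall>v\<in>V. \<exists>xs. walk V E xs \<and> hd xs = u \<and> last xs = v)"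

definition has_diameter :: "'a set \<Rightarrow> ('a \<Rightarrow> 'a \<Rightarrow> bool) \<Rightarrow> nat \<Rightarrow> bool" where
  "has_diameter V E d \<longleftrightarrow> connected_graph V E \<and> (\<forall>u\<in>V. \<forall>v\<in>V. gdist V E u v \<le> d)
     \<and> (\<exists>u\<in>V. \<exists>v\<in>V. gdist V E u v = d)"

definition pairing :: "'a set \<Rightarrow> 'a set set \<Rightarrow> bool" where
  "pairing V M \<longleftrightarrow> (\<forall>p\<in>M. card p = 2) \<and> (\<forall>p\<in>M. \<forall>q\<in>M. p \<noteq> q \<longrightarrow> p \<inter> q = {}) \<and> \<Union>M = V"

definition path_pairable :: "'a set \<Rightarrow> ('a \<Rightarrow> 'a \<Rightarrow> bool) \<Rightarrow> bool" where
  "path_pairable V E \<longleftrightarrow> even (card V) \<and>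
     (\<forall>M. pairing V M \<longrightarrow>
        (\<exists>P :: 'a set \<Rightarrow> 'a list.
           (\<forall>p\<in>M. gpath V E (P p) \<and> {hd (P p), last (P p)} = p) \<and>
           (\<forall>p\<in>M. \<forall>q\<in>M. p \<noteq> q \<longrightarrow> path_edges (P p) \<inter> path_edges (P q) = {})))"

end

theory Submission
  imports Defs
begin

text \<open>If U contains at most half of the vertices, pair each vertex of U with a distinct
  vertex outside U and pair the remaining vertices arbitrarily: the edge-disjoint paths of a
  path-pairing each leave U, so the edge boundary of U has at least card U edges. For the
  ball of radius i around x, with layer sizes s_j = |S_j|, this reads
  s_0 + \<dots> + s_i \<le> s_i s_(i+1); hence after 2j layers two consecutive layers sum to more
  than 2j, and the ball of radius k has more than (k/2)^2 vertices. The same argument applied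
  to the 1-Lipschitz function d - dist(x, \<cdot>), which vanishes at y, handles C.\<close>

lemma walk_snoc:
  assumes "walk V E xs" "E (last xs) b" "b \<in> V"
  shows "walk V E (xs @ [b])"
  using assms unfolding walk_def
  by (auto simp: nth_append last_conv_nth less_Suc_eq) (metis One_nat_def diff_Suc_1)

lemma gdist_walk:
  assumes "connected_graph V E" "u \<in> V" "v \<in> V"
  shows "\<exists>xs. walk V E xs \<and> hd xs = u \<and> last xs = v \<and> length xs = Suc (gdist V E u v)"
proof -
  obtain xs where xs: "walk V E xs" "hd xs = u" "last xs = v"
    using assms unfolding connected_graph_def by blast
  then have "length xs = Suc (length xs - 1)" by (cases xs) (auto simp: walk_def)
  with xs have "\<exists>k xs. walk V E xs \<and> hd xs = u \<and> last xs = v \<and> length xs = Suc k"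
    by blast
  then show ?thesis unfolding gdist_def by (rule LeastI_ex)
qed

lemma gdist_le:
  assumes "walk V E xs" "hd xs = u" "last xs = v" "length xs = Suc k"
  shows "gdist V E u v \<le> k"
  unfolding gdist_def using assms by (intro Least_le) blast

lemma gdist_self:
  assumes "u \<in> V"
  shows "gdist V E u u = 0"
  using gdist_le[of V E "[u]" u u 0] assms by (simp add: walk_def)

lemma gdist_edge:
  assumes "simple_graph V E" "connected_graph V E" "u \<in> V" "E a b"
  shows "gdist V E u b \<le> gdist V E u a + 1"
proof -
  have ab: "a \<in> V" "b \<in> V" using assms unfolding simple_graph_def by auto
  obtain xs where xs: "walk V E xs" "hd xs = u" "last xs = a" "length xs = Suc (gdist V E u a)"
    using gdist_walk[OF assms(2,3) ab(1)] by blast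
  have "walk V E (xs @ [b])" using walk_snoc[OF xs(1)] xs(3) assms(4) ab by simp
  moreover have "hd (xs @ [b]) = u" using xs by (cases xs) (auto simp: walk_def)
  ultimately show ?thesis using xs by (intro gdist_le[of V E "xs @ [b]"]) auto
qed

section \<open>Edge boundaries in path-pairable graphs\<close>

definition edge_boundary :: "('a \<Rightarrow> 'a \<Rightarrow> bool) \<Rightarrow> 'a set \<Rightarrow> 'a set set" where
  "edge_boundary E U = {{a, b} | a b. E a b \<and> a \<in> U \<and> b \<notin> U}"

lemma list_exits_set:
  assumes "xs \<noteq> []" "hd xs \<in> U" "last xs \<notin> U"
  shows "\<exists>i. Suc i < length xs \<and> xs ! i \<in> U \<and> xs ! Suc i \<notin> U"
  using assms
proof (induction xs)
  case Nil
  then show ?case by simp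
next
  case (Cons a xs)
  consider "xs = []" | "xs \<noteq> []" "hd xs \<in> U" | "xs \<noteq> []" "hd xs \<notin> U" by blast
  then show ?case
  proof cases
    case 1
    then show ?thesis using Cons by simp
  next
    case 2
    then obtain i where "Suc i < length xs" "xs ! i \<in> U" "xs ! Suc i \<notin> U"
      using Cons by auto
    then show ?thesis by (intro exI[of _ "Suc i"]) simp
  next
    case 3
    then show ?thesis using Cons by (intro exI[of _ 0]) (auto simp: hd_conv_nth)
  qed
qed

lemma walk_meets_edge_boundary:
  assumes sg: "simple_graph V E" and xs: "walk V E xs"
    and ends: "{hd xs, last xs} = {u, v}" and "u \<in> U" "v \<notin> U"
  shows "\<exists>e \<in> path_edges xs. e \<in> edge_boundary E U"
proof -
  have ne: "xs \<noteq> []" and adj: "\<And>i. Suc i < length xs \<Longrightarrow> E (xs ! i) (xs ! Suc i)"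
    using xs by (auto simp: walk_def)
  have edge: "{xs ! i, xs ! Suc i} \<in> path_edges xs" if "Suc i < length xs" for i
    using that unfolding path_edges_def by blast
  from ends consider "hd xs \<in> U" "last xs \<notin> U" | "hd xs \<in> - U" "last xs \<notin> - U"
    using assms(4,5) by (auto simp: doubleton_eq_iff)
  then show ?thesis
  proof cases
    case 1
    then obtain i where "Suc i < length xs" "xs ! i \<in> U" "xs ! Suc i \<notin> U"
      using list_exits_set[OF ne] by blast
    then show ?thesis using edge adj unfolding edge_boundary_def by blast
  next
    case 2
    then obtain i where i: "Suc i < length xs" "xs ! i \<notin> U" "xs ! Suc i \<in> U"
      using list_exits_set[OF ne] by blast
    then have "E (xs ! Suc i) (xs ! i)" using adj sg unfolding simple_graph_def by blast
    then have "{xs ! Suc i, xs ! i} \<in> edge_boundary E U"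
      using i unfolding edge_boundary_def by blast
    then show ?thesis using edge[OF i(1)] by (metis insert_commute)
  qed
qed

lemma pairing_exists:
  assumes "finite R" "even (card R)"
  shows "\<exists>M. pairing R M"
  using assms
proof (induction "card R" arbitrary: R rule: less_induct)
  case less
  show ?case
  proof (cases "R = {}")
    case True
    then show ?thesis by (intro exI[of _ "{}"]) (simp add: pairing_def)
  next
    case False
    then obtain a where a: "a \<in> R" by blast
    have "card R \<noteq> 0" using False less by simp
    then have "card R \<ge> 2" using less by presburger
    then obtain b where b: "b \<in> R" "b \<noteq> a"
      using a less(2) by (metis card_le_Suc0_iff_eq not_less_eq_eq numeral_2_eq_2)
    define R' where "R' = R - {a, b}"
    have "card R' = card R - 2" using a b less(2) unfolding R'_def by (subst card_Diff_subset) auto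
    then have "card R' < card R" "finite R'" "even (card R')"
      using \<open>card R \<ge> 2\<close> less by (auto simp: R'_def)
    then obtain M' where "pairing R' M'" using less by blast
    then have "pairing R (insert {a, b} M')"
      using a b unfolding pairing_def R'_def by (auto simp: card_insert_if)
    then show ?thesis by blast
  qed
qed

lemma pairing_matching_out:
  assumes fin: "finite V" and ev: "even (card V)" and UV: "U \<subseteq> V"
    and half: "2 * card U \<le> card V"
  shows "\<exists>M f. pairing V M \<and> (\<forall>u\<in>U. f u \<in> V - U \<and> {u, f u} \<in> M)"
proof -
  have fU: "finite U" using fin UV finite_subset by blast
  have "card U \<le> card (V - U)" using half UV fU by (simp add: card_Diff_subset)
  then obtain f where f: "f ` U \<subseteq> V - U" "inj_on f U"
    using card_le_inj[of U "V - U"] fin fU by blast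
  define R where "R = V - U - f ` U"
  have "card R = card V - card U - card U"
    unfolding R_def using f fin fU UV
    by (simp add: card_Diff_subset card_image finite_subset)
  then have "even (card R)" using ev half by presburger
  then obtain MR where MR: "pairing R MR" using pairing_exists[of R] fin R_def by auto
  define M where "M = (\<lambda>u. {u, f u}) ` U \<union> MR"
  have MR_sub: "\<And>p. p \<in> MR \<Longrightarrow> p \<subseteq> R" using MR by (auto simp: pairing_def)
  have "pairing V M"
    unfolding pairing_def
  proof (intro conjI ballI impI)
    fix p assume "p \<in> M"
    then consider "p \<in> MR" | u where "u \<in> U" "p = {u, f u}" unfolding M_def by blast
    then show "card p = 2"
    proof cases
      case 1
      then show ?thesis using MR by (simp add: pairing_def)
    next
      case 2
      then have "u \<noteq> f u" using f(1) by auto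
      then show ?thesis using 2 by simp
    qed
  next
    fix p q assume pq: "p \<in> M" "q \<in> M" "p \<noteq> q"
    consider "p \<in> MR" "q \<in> MR" | u where "u \<in> U" "p = {u, f u}" "q \<in> MR"
      | u where "u \<in> U" "q = {u, f u}" "p \<in> MR"
      | u u' where "u \<in> U" "u' \<in> U" "p = {u, f u}" "q = {u', f u'}"
      using pq unfolding M_def by blast
    then show "p \<inter> q = {}"
    proof cases
      case 1
      then show ?thesis using MR pq by (auto simp: pairing_def)
    next
      case 2
      then show ?thesis using MR_sub[of q] by (auto simp: R_def)
    next
      case 3
      then show ?thesis using MR_sub[of p] by (auto simp: R_def)
    next
      case 4
      then have "u \<noteq> u'" "f u \<noteq> f u'" using pq f(2) by (auto dest: inj_onD)
      then show ?thesis using 4 f(1) by auto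
    qed
  next
    have "\<Union>MR = R" using MR by (simp add: pairing_def)
    then show "\<Union>M = V" unfolding M_def R_def using UV f(1) by auto
  qed
  then show ?thesis using f(1) unfolding M_def by blast
qed

lemma path_pairable_card_le_edge_boundary:
  assumes sg: "simple_graph V E" and pp: "path_pairable V E"
    and UV: "U \<subseteq> V" and half: "2 * card U \<le> card V"
  shows "card U \<le> card (edge_boundary E U)"
proof -
  have fin: "finite V" using sg by (simp add: simple_graph_def)
  have ev: "even (card V)" using pp by (simp add: path_pairable_def)
  obtain M f where M: "pairing V M" and f: "\<And>u. u \<in> U \<Longrightarrow> f u \<in> V - U \<and> {u, f u} \<in> M"
    using pairing_matching_out[OF fin ev UV half] by blast
  from pp M obtain P where P: "\<forall>p\<in>M. gpath V E (P p) \<and> {hd (P p), last (P p)} = p"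
    and disj: "\<forall>p\<in>M. \<forall>q\<in>M. p \<noteq> q \<longrightarrow> path_edges (P p) \<inter> path_edges (P q) = {}"
    unfolding path_pairable_def by blast
  have "\<forall>u\<in>U. \<exists>e. e \<in> path_edges (P {u, f u}) \<and> e \<in> edge_boundary E U"
  proof
    fix u assume u: "u \<in> U"
    have "gpath V E (P {u, f u})" "{hd (P {u, f u}), last (P {u, f u})} = {u, f u}"
      using P f[OF u] by auto
    then show "\<exists>e. e \<in> path_edges (P {u, f u}) \<and> e \<in> edge_boundary E U"
      using walk_meets_edge_boundary[OF sg _ _ u, of "P {u, f u}" "f u"] f[OF u]
      by (auto simp: gpath_def)
  qed
  then have "\<exists>g. \<forall>u\<in>U. g u \<in> path_edges (P {u, f u}) \<and> g u \<in> edge_boundary E U"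
    by (rule bchoice)
  then obtain g where g: "\<forall>u\<in>U. g u \<in> path_edges (P {u, f u}) \<and> g u \<in> edge_boundary E U"
    by blast
  have "inj_on g U"
  proof (rule inj_onI)
    fix u u' assume uu: "u \<in> U" "u' \<in> U" "g u = g u'"
    have M_uu: "{u, f u} \<in> M" "{u', f u'} \<in> M" using f[OF uu(1)] f[OF uu(2)] by blast+
    have "{u, f u} = {u', f u'}"
    proof (rule ccontr)
      assume "{u, f u} \<noteq> {u', f u'}"
      then have "path_edges (P {u, f u}) \<inter> path_edges (P {u', f u'}) = {}"
        using disj M_uu by simp
      then show False using g uu by auto
    qed
    then show "u = u'" using f uu by (auto simp: doubleton_eq_iff)
  qed
  moreover have "g ` U \<subseteq> edge_boundary E U" using g by auto
  moreover have "finite (edge_boundary E U)"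
  proof -
    have "edge_boundary E U \<subseteq> Pow V"
      using sg unfolding edge_boundary_def simple_graph_def by auto
    then show ?thesis using fin by (meson finite_Pow_iff finite_subset)
  qed
  ultimately show ?thesis by (rule card_inj_on_le)
qed

section \<open>Growth of sublevel sets of a 1-Lipschitz function\<close>

lemma card_sublevel_eq_sum:
  fixes D :: "'a \<Rightarrow> nat"
  assumes "finite V"
  shows "card {z \<in> V. D z \<le> i} = (\<Sum>j\<le>i. card {z \<in> V. D z = j})"
proof -
  have "{z \<in> V. D z \<le> i} = (\<Union>j\<le>i. {z \<in> V. D z = j})" by auto
  moreover have "card (\<Union>j\<le>i. {z \<in> V. D z = j}) = (\<Sum>j\<le>i. card {z \<in> V. D z = j})"
    by (rule card_UN_disjoint) (auto simp: assms)
  ultimately show ?thesis by simp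
qed

lemma card_edge_boundary_sublevel_le:
  assumes sg: "simple_graph V E" and lip: "\<And>a b. E a b \<Longrightarrow> D b \<le> D a + 1"
  shows "card (edge_boundary E {z \<in> V. D z \<le> i})
           \<le> card {z \<in> V. D z = i} * card {z \<in> V. D z = Suc i}"
proof -
  let ?S = "\<lambda>j. {z \<in> V. D z = j}"
  have fin: "finite (?S j)" for j using sg by (simp add: simple_graph_def)
  have sym: "E b a" if "E a b" for a b using that sg by (simp add: simple_graph_def)
  have "edge_boundary E {z \<in> V. D z \<le> i} \<subseteq> (\<lambda>(a, b). {a, b}) ` (?S i \<times> ?S (Suc i))"
  proof
    fix e assume "e \<in> edge_boundary E {z \<in> V. D z \<le> i}"
    then obtain a b where ab: "e = {a, b}" "E a b" "a \<in> V" "D a \<le> i" "b \<notin> {z \<in> V. D z \<le> i}"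
      unfolding edge_boundary_def by blast
    have "b \<in> V" using ab(2) sg by (simp add: simple_graph_def)
    then have "D a = i" "D b = Suc i" using ab lip[OF ab(2)] lip[OF sym[OF ab(2)]] by auto
    then show "e \<in> (\<lambda>(a, b). {a, b}) ` (?S i \<times> ?S (Suc i))" using ab \<open>b \<in> V\<close> by auto
  qed
  then have "card (edge_boundary E {z \<in> V. D z \<le> i})
      \<le> card ((\<lambda>(a, b). {a, b}) ` (?S i \<times> ?S (Suc i)))"
    using fin by (intro card_mono) auto
  also have "\<dots> \<le> card (?S i \<times> ?S (Suc i))" by (rule card_image_le) (simp add: fin)
  finally show ?thesis by (simp add: card_cartesian_product)
qed

lemma four_mult_le_square_add: "4 * ((a::nat) * b) \<le> (a + b)^2"
proof -
  have "0 \<le> (int a - int b)^2" by simp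
  moreover have "(int a - int b)^2 = int ((a + b)^2) - int (4 * (a * b))"
    by (simp add: power2_eq_square algebra_simps)
  ultimately show ?thesis by linarith
qed

lemma sum_le_mult_imp_quadratic_growth:
  fixes s :: "nat \<Rightarrow> nat"
  assumes s0: "s 0 \<ge> 1" and grow: "\<And>i. i < k \<Longrightarrow> (\<Sum>j\<le>i. s j) \<le> s i * s (Suc i)"
  shows "(k div 2)^2 + 1 \<le> (\<Sum>j\<le>k. s j)"
proof -
  have "j^2 + 1 \<le> (\<Sum>l\<le>2*j. s l)" if "2 * j \<le> k" for j
    using that
  proof (induction j)
    case 0
    then show ?case using s0 by simp
  next
    case (Suc j)
    define a b T where "a = s (Suc (2*j))" and "b = s (Suc (Suc (2*j)))"
      and "T = (\<Sum>l\<le>2*j. s l)"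
    have IH: "j^2 + 1 \<le> T" using Suc T_def by simp
    have "T + a \<le> a * b" using grow[of "Suc (2*j)"] Suc.prems by (simp add: a_def b_def T_def)
    then have "j^2 + 1 \<le> a * b" using IH by linarith
    then have "4 * (j^2 + 1) \<le> 4 * (a * b)" by simp
    then have "4 * (j^2 + 1) \<le> (a + b)^2"
      using four_mult_le_square_add[of a b] by (rule order_trans)
    moreover have "(2*j)^2 < 4 * (j^2 + 1)" by (simp add: power_mult_distrib)
    ultimately have "(2*j)^2 < (a + b)^2" by linarith
    then have "2*j < a + b" by (rule power_less_imp_less_base) simp
    moreover have "(\<Sum>l\<le>2*Suc j. s l) = T + a + b" by (simp add: T_def a_def b_def)
    moreover have "(Suc j)^2 = j^2 + 2*j + 1" by (simp add: power2_eq_square)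
    ultimately show ?case using IH by linarith
  qed
  then have "(k div 2)^2 + 1 \<le> (\<Sum>l\<le>2*(k div 2). s l)" by simp
  also have "\<dots> \<le> (\<Sum>l\<le>k. s l)" by (intro sum_mono2) auto
  finally show ?thesis .
qed

lemma card_sublevel_ge_quadratic:
  assumes sg: "simple_graph V E" and pp: "path_pairable V E"
    and lip: "\<And>a b. E a b \<Longrightarrow> D b \<le> D a + 1"
    and z0: "z0 \<in> V" "D z0 = 0"
    and half: "2 * card {z \<in> V. D z \<le> k} \<le> card V"
  shows "(k div 2)^2 + 1 \<le> card {z \<in> V. D z \<le> k}"
proof -
  have fin: "finite V" using sg by (simp add: simple_graph_def)
  define s where "s j = card {z \<in> V. D z = j}" for j
  have sum_s: "card {z \<in> V. D z \<le> i} = (\<Sum>j\<le>i. s j)" for i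
    unfolding s_def by (rule card_sublevel_eq_sum[OF fin])
  have "s 0 \<ge> 1" using z0 fin by (auto simp: s_def Suc_le_eq card_gt_0_iff)
  moreover have "(\<Sum>j\<le>i. s j) \<le> s i * s (Suc i)" if "i < k" for i
  proof -
    have "card {z \<in> V. D z \<le> i} \<le> card {z \<in> V. D z \<le> k}"
      using that fin by (intro card_mono) auto
    then have "2 * card {z \<in> V. D z \<le> i} \<le> card V" using half by linarith
    then have "card {z \<in> V. D z \<le> i} \<le> card (edge_boundary E {z \<in> V. D z \<le> i})"
      by (intro path_pairable_card_le_edge_boundary[OF sg pp]) auto
    also have "\<dots> \<le> s i * s (Suc i)"
      unfolding s_def by (rule card_edge_boundary_sublevel_le[OF sg lip])
    finally show ?thesis by (simp only: sum_s)
  qed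
  ultimately have "(k div 2)^2 + 1 \<le> (\<Sum>j\<le>k. s j)"
    by (rule sum_le_mult_imp_quadratic_growth)
  then show ?thesis by (simp only: sum_s)
qed

lemma card_sublevel_ge_min:
  assumes sg: "simple_graph V E" and pp: "path_pairable V E"
    and lip: "\<And>a b. E a b \<Longrightarrow> D b \<le> D a + 1"
    and z0: "z0 \<in> V" "D z0 = 0"
    and d: "d \<ge> 20" "d \<le> 3 * k"
  shows "min (real (card V) / 2) (real d ^ 2 / 100) \<le> real (card {z \<in> V. D z \<le> k})"
proof (cases "2 * card {z \<in> V. D z \<le> k} \<le> card V")
  case True
  have "d \<le> 10 * (k div 2)" using d by linarith
  then have "d^2 \<le> 100 * (k div 2)^2" using power_mono[of d "10 * (k div 2)" 2]
    by (simp add: power_mult_distrib)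
  also have "\<dots> \<le> 100 * card {z \<in> V. D z \<le> k}"
    using card_sublevel_ge_quadratic[OF sg pp lip z0 True] by simp
  finally have "real (d^2) \<le> real (100 * card {z \<in> V. D z \<le> k})" by linarith
  then show ?thesis by simp
next
  case False
  then show ?thesis by linarith
qed

theorem lemma2:
  fixes V :: "'a set" and E :: "'a \<Rightarrow> 'a \<Rightarrow> bool" and d :: nat and x y :: 'a
  assumes "simple_graph V E"
    and "path_pairable V E"
    and "has_diameter V E d"
    and "d \<ge> 20"
    and "x \<in> V" and "y \<in> V" and "gdist V E x y = d"
  defines "S \<equiv> (\<lambda>i. {z \<in> V. gdist V E x z = i})"
  defines "A \<equiv> (\<Union>i\<in>{0..nat \<lceil>real d / 3\<rceil>}. S i)"
  defines "C \<equiv> (\<Union>i\<in>{nat \<lfloor>2 * real d / 3\<rfloor>..d}. S i)"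
  shows "real (card A) \<ge> min (real (card V) / 2) (real d ^ 2 / 100) \<and>
         real (card C) \<ge> min (real (card V) / 2) (real d ^ 2 / 100)"
proof
  note sg = assms(1) and pp = assms(2)
  let ?D = "gdist V E x"
  have conn: "connected_graph V E" and le_d: "\<And>z. z \<in> V \<Longrightarrow> ?D z \<le> d"
    using assms(3,5) unfolding has_diameter_def by auto
  have lip: "?D b \<le> ?D a + 1" if "E a b" for a b
    using gdist_edge[OF sg conn assms(5) that] .
  have lip': "d - ?D b \<le> d - ?D a + 1" if "E a b" for a b
    using lip[of b a] le_d[of b] that sg by (simp add: simple_graph_def)
  define k where "k = nat \<lceil>real d / 3\<rceil>"
  define m where "m = nat \<lfloor>2 * real d / 3\<rfloor>"
  have "d \<le> 3 * k" unfolding k_def by linarith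
  moreover have "A = {z \<in> V. ?D z \<le> k}" by (auto simp: A_def S_def k_def)
  ultimately show "real (card A) \<ge> min (real (card V) / 2) (real d ^ 2 / 100)"
    using card_sublevel_ge_min[where D = ?D, OF sg pp lip assms(5) gdist_self[OF assms(5)] assms(4)] by simp
  have "3 * m \<le> 2 * d" unfolding m_def by linarith
  then have "d \<le> 3 * (d - m)" by simp
  moreover have "C = {z \<in> V. d - ?D z \<le> d - m}"
    using le_d \<open>3 * m \<le> 2 * d\<close> by (auto simp: C_def S_def m_def[symmetric])
  ultimately show "real (card C) \<ge> min (real (card V) / 2) (real d ^ 2 / 100)"
    using card_sublevel_ge_min[where D = "\<lambda>z. d - ?D z", OF sg pp lip' assms(6) _ assms(4), of "d - m"] assms(7) by simp
qed

end
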